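(* No graph of the form $G_4\star G_4'$ (with $G_4,G_4'$ any graphs on $4$ vertices) is $3$-ball packable, except $C_4\star C_4$.
   Context: $C_4$ is the $4$-cycle, $\star$ the graph join. A $3$-ball in $\hat{\mathbb R}^3$ is a closed ball, closed exterior of an open ball with $\infty$, or a closed half-space with $\infty$; a $3$-ball packing is a collection of $3$-balls with disjoint interiors; its tangency graph joins balls meeting in exactly one point; a graph is $3$-ball packable if isomorphic to the tangency graph of some $3$-ball packing. *)

theory Defs
  imports "HOL-Analysis.Analysis"
begin

(* Points of the extended space R^3 \<union> {\<infinity>}: None is the point at infinity. *)
type_synonym xpt = "(real^3) option"

(* 3-balls: closed ball (centre, radius), closed exterior of an open ball together
   with \<infinity> (centre, radius), closed half-space {x. a\<bullet>x \<le> c} together with \<infinity>. *)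
datatype ball3 = CBall "real^3" real | Exterior "real^3" real | HalfSpace "real^3" real

fun valid_ball3 :: "ball3 \<Rightarrow> bool" where
  "valid_ball3 (CBall c r) = (r > 0)"
| "valid_ball3 (Exterior c r) = (r > 0)"
| "valid_ball3 (HalfSpace a c) = (a \<noteq> 0)"

fun ball3_set :: "ball3 \<Rightarrow> xpt set" where
  "ball3_set (CBall c r) = Some ` cball c r"
| "ball3_set (Exterior c r) = insert None (Some ` (- ball c r))"
| "ball3_set (HalfSpace a c) = insert None (Some ` {x. a \<bullet> x \<le> c})"

fun ball3_interior :: "ball3 \<Rightarrow> xpt set" where
  "ball3_interior (CBall c r) = Some ` ball c r"
| "ball3_interior (Exterior c r) = insert None (Some ` (- cball c r))"
| "ball3_interior (HalfSpace a c) = insert None (Some ` {x. a \<bullet> x < c})"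

definition tangent3 :: "ball3 \<Rightarrow> ball3 \<Rightarrow> bool" where
  "tangent3 B B' \<longleftrightarrow> (\<exists>!p. p \<in> ball3_set B \<inter> ball3_set B')"

definition simple_graph :: "'a set \<Rightarrow> ('a \<Rightarrow> 'a \<Rightarrow> bool) \<Rightarrow> bool" where
  "simple_graph V E \<longleftrightarrow> finite V \<and> (\<forall>x y. E x y \<longrightarrow> x \<in> V \<and> y \<in> V \<and> x \<noteq> y \<and> E y x)"

definition graph_iso :: "'a set \<Rightarrow> ('a \<Rightarrow> 'a \<Rightarrow> bool) \<Rightarrow> 'b set \<Rightarrow> ('b \<Rightarrow> 'b \<Rightarrow> bool) \<Rightarrow> bool" where
  "graph_iso V E W F \<longleftrightarrow> (\<exists>f. bij_betw f V W \<and> (\<forall>x\<in>V. \<forall>y\<in>V. E x y \<longleftrightarrow> F (f x) (f y)))"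

definition ball_packable3 :: "'a set \<Rightarrow> ('a \<Rightarrow> 'a \<Rightarrow> bool) \<Rightarrow> bool" where
  "ball_packable3 V E \<longleftrightarrow> (\<exists>b :: 'a \<Rightarrow> ball3.
      (\<forall>v\<in>V. valid_ball3 (b v)) \<and> inj_on b V \<and>
      (\<forall>u\<in>V. \<forall>v\<in>V. u \<noteq> v \<longrightarrow> ball3_interior (b u) \<inter> ball3_interior (b v) = {}) \<and>
      (\<forall>u\<in>V. \<forall>v\<in>V. u \<noteq> v \<longrightarrow> (E u v \<longleftrightarrow> tangent3 (b u) (b v))))"

definition join_verts :: "'a set \<Rightarrow> 'b set \<Rightarrow> ('a + 'b) set" where
  "join_verts V W = V <+> W"

fun join_edges :: "'a set \<Rightarrow> ('a \<Rightarrow> 'a \<Rightarrow> bool) \<Rightarrow> 'b set \<Rightarrow> ('b \<Rightarrow> 'b \<Rightarrow> bool)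
    \<Rightarrow> ('a + 'b) \<Rightarrow> ('a + 'b) \<Rightarrow> bool" where
  "join_edges V E W F (Inl x) (Inl y) = E x y"
| "join_edges V E W F (Inr x) (Inr y) = F x y"
| "join_edges V E W F (Inl x) (Inr y) = (x \<in> V \<and> y \<in> W)"
| "join_edges V E W F (Inr x) (Inl y) = (x \<in> W \<and> y \<in> V)"

definition C4_verts :: "nat set" where "C4_verts = {0..<4}"
definition C4_edges :: "nat \<Rightarrow> nat \<Rightarrow> bool" where
  "C4_edges i j \<longleftrightarrow> i < 4 \<and> j < 4 \<and> (j = (i + 1) mod 4 \<or> i = (j + 1) mod 4)"

end

theory Submission
  imports Defs
begin

(*
  Inversive coordinates send every 3-ball to a vector of Lorentz norm 1 in the Minkowski space
  of signature (4,1). Two balls with disjoint interiors have Lorentz product at most -1, with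
  equality exactly when they are tangent (or complementary). A packing of a join G4 * G4'
  therefore yields families a_i (i in V) and b_j (j in W) of such vectors with all cross
  products equal to -1.

  Both families are affinely dependent: the differences a_i - a_i0 and b_j - b_j0 span mutually
  orthogonal spacelike subspaces, whose dimensions add up to at most 4, while an affine
  dependence of four vectors of a packing has no zero coefficient. For a dependence with
  coefficients c_i, the vector alpha = sum |c_i| a_i has Lorentz square at most -(sum |c_i|)^2,
  with equality only if a_i and a_k have product -1 whenever c_i c_k < 0. The analogous beta of
  the other side has product -(sum |c_i|)(sum |d_j|) with alpha, so the reverse Cauchy-Schwarz
  inequality forces equality. Then the two vertices with positive coefficient are tangent to
  the two with negative coefficient and not to each other: each side is a 4-cycle.
*)

section \<open>Lorentz space\<close>

type_synonym lorentz_vec = "(real^3) \<times> real \<times> real"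

definition lorentz :: "lorentz_vec \<Rightarrow> lorentz_vec \<Rightarrow> real" where
  "lorentz u v = fst u \<bullet> fst v + fst (snd u) * fst (snd v) - snd (snd u) * snd (snd v)"

definition space_part :: "lorentz_vec \<Rightarrow> (real^3) \<times> real" where
  "space_part u = (fst u, fst (snd u))"

definition time_part :: "lorentz_vec \<Rightarrow> real" where
  "time_part u = snd (snd u)"

lemma lorentz_space_time_part: "lorentz u v = space_part u \<bullet> space_part v - time_part u * time_part v"
  by (simp add: lorentz_def space_part_def time_part_def)

lemma lorentz_vec_eq_0_iff: "u = 0 \<longleftrightarrow> space_part u = 0 \<and> time_part u = 0"
  by (cases u) (auto simp: space_part_def time_part_def zero_prod_def)

lemma lorentz_comm: "lorentz u v = lorentz v u"
  by (simp add: lorentz_def inner_commute mult.commute)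

lemma lorentz_add_left: "lorentz (x + y) v = lorentz x v + lorentz y v"
  by (simp add: lorentz_def inner_add_left algebra_simps)

lemma lorentz_add_right: "lorentz v (x + y) = lorentz v x + lorentz v y"
  by (simp add: lorentz_def inner_add_right algebra_simps)

lemma lorentz_diff_left: "lorentz (x - y) v = lorentz x v - lorentz y v"
  by (simp add: lorentz_def inner_diff_left algebra_simps)

lemma lorentz_diff_right: "lorentz v (x - y) = lorentz v x - lorentz v y"
  by (simp add: lorentz_def inner_diff_right algebra_simps)

lemma lorentz_minus_left: "lorentz (- x) v = - lorentz x v"
  by (simp add: lorentz_def algebra_simps)

lemma lorentz_minus_right: "lorentz v (- x) = - lorentz v x"
  by (simp add: lorentz_def algebra_simps)

lemma lorentz_scaleR_left: "lorentz (r *\<^sub>R x) v = r * lorentz x v"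
  by (simp add: lorentz_def algebra_simps)

lemma lorentz_scaleR_right: "lorentz v (r *\<^sub>R x) = r * lorentz v x"
  by (simp add: lorentz_def algebra_simps)

lemma lorentz_zero_left [simp]: "lorentz 0 v = 0"
  by (simp add: lorentz_def)

lemma lorentz_zero_right [simp]: "lorentz v 0 = 0"
  by (simp add: lorentz_def)

lemma lorentz_sum_left: "lorentz (\<Sum>i\<in>I. f i) v = (\<Sum>i\<in>I. lorentz (f i) v)"
  by (induction I rule: infinite_finite_induct) (auto simp: lorentz_add_left)

lemma lorentz_sum_right: "lorentz v (\<Sum>i\<in>I. f i) = (\<Sum>i\<in>I. lorentz v (f i))"
  by (induction I rule: infinite_finite_induct) (auto simp: lorentz_add_right)

lemmas lorentz_simps = lorentz_add_left lorentz_add_right lorentz_diff_left lorentz_diff_right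
  lorentz_minus_left lorentz_minus_right lorentz_scaleR_left lorentz_scaleR_right
  lorentz_sum_left lorentz_sum_right

lemma lorentz_orthogonal_timelike:
  assumes t: "lorentz t t < 0" and xt: "lorentz x t = 0"
  shows "0 \<le> lorentz x x" and "lorentz x x = 0 \<Longrightarrow> x = 0"
proof -
  let ?X = "space_part x" and ?T = "space_part t"
  have XT: "?X \<bullet> ?T = time_part x * time_part t" using xt by (simp add: lorentz_space_time_part)
  have T: "?T \<bullet> ?T < (time_part t)\<^sup>2" using t by (simp add: lorentz_space_time_part power2_eq_square)
  have t0: "0 < (time_part t)\<^sup>2" using T by (metis inner_ge_zero le_less_trans)
  have "(time_part x)\<^sup>2 * (time_part t)\<^sup>2 \<le> (?X \<bullet> ?X) * (?T \<bullet> ?T)"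
    using Cauchy_Schwarz_ineq[of ?X ?T] XT by (simp add: power_mult_distrib)
  also have "\<dots> \<le> (?X \<bullet> ?X) * (time_part t)\<^sup>2"
    using T by (intro mult_left_mono) auto
  finally have "(time_part x)\<^sup>2 \<le> ?X \<bullet> ?X" using t0 by simp
  then show "0 \<le> lorentz x x" by (simp add: lorentz_space_time_part power2_eq_square)
  assume "lorentz x x = 0"
  then have XX: "?X \<bullet> ?X = (time_part x)\<^sup>2" by (simp add: lorentz_space_time_part power2_eq_square)
  have "(?X \<bullet> ?X) * (time_part t)\<^sup>2 \<le> (?X \<bullet> ?X) * (?T \<bullet> ?T)"
    using Cauchy_Schwarz_ineq[of ?X ?T] XT XX by (simp add: power_mult_distrib)
  then have "(?X \<bullet> ?X) * ((time_part t)\<^sup>2 - ?T \<bullet> ?T) \<le> 0" by (simp add: algebra_simps)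
  then have "?X \<bullet> ?X \<le> 0" using T by (simp add: mult_le_0_iff)
  then have "?X = 0" by (metis inner_ge_zero inner_eq_zero_iff order_antisym)
  then show "x = 0" using XX by (simp add: lorentz_vec_eq_0_iff)
qed

lemma lorentz_reverse_Cauchy_Schwarz:
  assumes x: "lorentz x x < 0"
  shows "lorentz x x * lorentz y y \<le> (lorentz x y)\<^sup>2"
proof -
  define k where "k = lorentz x y / lorentz x x"
  define z where "z = y - k *\<^sub>R x"
  have "lorentz z x = 0" using x by (simp add: z_def k_def lorentz_simps lorentz_comm)
  then have "0 \<le> lorentz z z" by (rule lorentz_orthogonal_timelike(1)[OF x])
  moreover have "lorentz z z = lorentz y y - k * lorentz x y"
    using x by (simp add: z_def k_def lorentz_simps lorentz_comm field_simps power2_eq_square)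
  ultimately have "lorentz x x * (lorentz y y - k * lorentz x y) \<le> 0"
    using x by (simp add: mult_nonpos_nonneg)
  then show ?thesis using x by (simp add: k_def right_diff_distrib power2_eq_square)
qed

lemma lorentz_orthogonal_sum_eq_timelike:
  assumes s: "lorentz s s < 0" and t: "lorentz t t < 0" and e: "lorentz e e < 0"
    and Xs: "lorentz X s = 0" and Yt: "lorentz Y t = 0" and XY: "lorentz X Y = 0"
    and sum: "X + Y = u *\<^sub>R e"
  shows "X = 0" and "Y = 0" and "u = 0"
proof -
  note X = lorentz_orthogonal_timelike[OF s Xs] and Y = lorentz_orthogonal_timelike[OF t Yt]
  have "lorentz X X + lorentz Y Y = lorentz (X + Y) (X + Y)"
    using XY by (simp add: lorentz_simps lorentz_comm)
  also have "\<dots> = u\<^sup>2 * lorentz e e"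
    unfolding sum by (simp add: lorentz_simps power2_eq_square)
  finally have "lorentz X X + lorentz Y Y = u\<^sup>2 * lorentz e e" .
  moreover have "u\<^sup>2 * lorentz e e \<le> 0" using e by (simp add: mult_nonneg_nonpos)
  ultimately have "lorentz X X = 0" "lorentz Y Y = 0" "u\<^sup>2 * lorentz e e = 0"
    using X(1) Y(1) by linarith+
  then show "X = 0" "Y = 0" "u = 0" using X(2) Y(2) e by auto
qed

lemma lorentz_difference_combination:
  assumes "\<forall>i\<in>P. lorentz (a i) v = lorentz (a i0) v"
  shows "lorentz (\<Sum>i\<in>P. u i *\<^sub>R (a i - a i0)) v = 0"
proof -
  have "lorentz (\<Sum>i\<in>P. u i *\<^sub>R (a i - a i0)) v = (\<Sum>i\<in>P. u i * (lorentz (a i) v - lorentz (a i0) v))"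
    by (simp add: lorentz_sum_left lorentz_scaleR_left lorentz_diff_left)
  also have "\<dots> = 0" using assms by (intro sum.neutral) auto
  finally show ?thesis .
qed

section \<open>Affine dependences of packing families\<close>

definition packing_family :: "'i set \<Rightarrow> ('i \<Rightarrow> lorentz_vec) \<Rightarrow> bool" where
  "packing_family V a \<longleftrightarrow> (\<forall>i\<in>V. lorentz (a i) (a i) = 1) \<and>
     (\<forall>i\<in>V. \<forall>k\<in>V. i \<noteq> k \<longrightarrow> lorentz (a i) (a k) \<le> -1)"

lemma packing_familyD:
  assumes "packing_family V a" and "i \<in> V"
  shows "lorentz (a i) (a i) = 1" and "k \<in> V \<Longrightarrow> i \<noteq> k \<Longrightarrow> lorentz (a i) (a k) \<le> -1"
  using assms by (auto simp: packing_family_def)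

lemma packing_family_sum_timelike:
  assumes fin: "finite V" and card: "3 \<le> card V" and fam: "packing_family V a"
  shows "lorentz (\<Sum>i\<in>V. a i) (\<Sum>i\<in>V. a i) < 0"
proof -
  have "lorentz (\<Sum>i\<in>V. a i) (\<Sum>i\<in>V. a i) = (\<Sum>i\<in>V. \<Sum>k\<in>V. lorentz (a k) (a i))"
    by (simp add: lorentz_sum_left lorentz_sum_right)
  also have "\<dots> \<le> (\<Sum>i\<in>V. \<Sum>k\<in>V. 2 * (if k = i then 1 else 0) - 1)"
    using packing_familyD[OF fam] by (intro sum_mono) (fastforce simp: not_less)
  also have "\<dots> = (\<Sum>i\<in>V. 2 - real (card V))"
    using fin by (intro sum.cong) (simp_all add: sum_subtractf sum_distrib_left[symmetric])
  also have "\<dots> = real (card V) * (2 - real (card V))" by simp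
  also have "\<dots> < 0" using card by (intro mult_pos_neg) auto
  finally show ?thesis .
qed

definition affine_dependence :: "'i set \<Rightarrow> ('i \<Rightarrow> lorentz_vec) \<Rightarrow> ('i \<Rightarrow> real) \<Rightarrow> bool" where
  "affine_dependence V a c \<longleftrightarrow>
     (\<Sum>i\<in>V. c i) = 0 \<and> (\<Sum>i\<in>V. c i *\<^sub>R a i) = 0 \<and> (\<exists>i\<in>V. c i \<noteq> 0)"

lemma affine_dependence_uminus: "affine_dependence V a c \<Longrightarrow> affine_dependence V a (\<lambda>i. - c i)"
  by (simp add: affine_dependence_def sum_negf)

lemma affine_dependence_lorentz_sum:
  assumes "affine_dependence V a c"
  shows "(\<Sum>i\<in>V. c i * (lorentz v (a i) + 1)) = 0"
proof -
  have "lorentz v (\<Sum>i\<in>V. c i *\<^sub>R a i) = 0" using assms by (simp add: affine_dependence_def)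
  then show ?thesis
    using assms by (simp add: affine_dependence_def lorentz_simps distrib_left sum.distrib)
qed

lemma affine_dependence_pos_card:
  assumes fin: "finite V" and fam: "packing_family V a" and dep: "affine_dependence V a c"
  shows "2 \<le> card {i\<in>V. 0 < c i}"
proof -
  have "\<exists>k\<in>V. 0 < c k"
  proof (rule ccontr)
    assume "\<not> ?thesis"
    then have nonpos: "\<forall>i\<in>V. c i \<le> 0" by (auto simp: not_less)
    obtain i where "i \<in> V" "c i \<noteq> 0" using dep by (auto simp: affine_dependence_def)
    then have "(\<Sum>i\<in>V. c i) < (\<Sum>i\<in>V. 0)"
      using fin nonpos by (intro sum_strict_mono_ex1) (auto simp: order_less_le)
    then show False using dep by (simp add: affine_dependence_def)
  qed
  then obtain k where k: "k \<in> V" "0 < c k" by blast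
  have "\<exists>k'\<in>V. k' \<noteq> k \<and> 0 < c k'"
  proof (rule ccontr)
    assume "\<not> ?thesis"
    then have "0 \<le> c i * (lorentz (a k) (a i) + 1)" if "i \<in> V - {k}" for i
      using that packing_familyD(2)[OF fam k(1), of i] by (intro mult_nonpos_nonpos) auto
    then have "0 \<le> (\<Sum>i\<in>V - {k}. c i * (lorentz (a k) (a i) + 1))" by (rule sum_nonneg)
    moreover have "c k * (lorentz (a k) (a k) + 1) = 2 * c k"
      using fam k by (simp add: packing_family_def)
    ultimately have "0 < (\<Sum>i\<in>V. c i * (lorentz (a k) (a i) + 1))"
      using fin k by (simp add: sum.remove)
    then show False using affine_dependence_lorentz_sum[OF dep] by simp
  qed
  then obtain k' where k': "k' \<in> V" "k' \<noteq> k" "0 < c k'" by blast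
  have "card {k, k'} \<le> card {i\<in>V. 0 < c i}"
    using fin k k' by (intro card_mono) auto
  then show ?thesis using k' by simp
qed

lemma affine_dependence_sign_partition:
  assumes fin: "finite V" and card: "card V = 4"
    and fam: "packing_family V a" and dep: "affine_dependence V a c"
  shows "card {i\<in>V. 0 < c i} = 2" and "card {i\<in>V. c i < 0} = 2" and "\<forall>i\<in>V. c i \<noteq> 0"
proof -
  let ?P = "{i\<in>V. 0 < c i}" and ?N = "{i\<in>V. c i < 0}"
  have P: "2 \<le> card ?P" using affine_dependence_pos_card[OF fin fam dep] .
  have N: "2 \<le> card ?N"
    using affine_dependence_pos_card[OF fin fam affine_dependence_uminus[OF dep]] by simp
  have PN: "card (?P \<union> ?N) = card ?P + card ?N" using fin by (intro card_Un_disjoint) auto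
  moreover have "card (?P \<union> ?N) \<le> card V" using fin by (intro card_mono) auto
  ultimately show "card ?P = 2" "card ?N = 2" using P N card by linarith+
  then have "card (?P \<union> ?N) = card V" using card PN by simp
  then have "?P \<union> ?N = V" using fin by (intro card_subset_eq) auto
  then show "\<forall>i\<in>V. c i \<noteq> 0" by force
qed

lemma affine_dependence_abs_sum_pos:
  assumes "finite V" and "affine_dependence V a c"
  shows "0 < (\<Sum>i\<in>V. \<bar>c i\<bar>)"
proof -
  obtain i where "i \<in> V" "c i \<noteq> 0" using assms(2) by (auto simp: affine_dependence_def)
  then show ?thesis using assms(1) by (intro sum_pos2[of V i]) auto
qed

lemma affine_dependence_abs_combination:
  assumes fin: "finite V" and fam: "packing_family V a" and dep: "affine_dependence V a c"
  shows "lorentz (\<Sum>i\<in>V. \<bar>c i\<bar> *\<^sub>R a i) (\<Sum>i\<in>V. \<bar>c i\<bar> *\<^sub>R a i) \<le> - (\<Sum>i\<in>V. \<bar>c i\<bar>)\<^sup>2"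
    and "lorentz (\<Sum>i\<in>V. \<bar>c i\<bar> *\<^sub>R a i) (\<Sum>i\<in>V. \<bar>c i\<bar> *\<^sub>R a i) = - (\<Sum>i\<in>V. \<bar>c i\<bar>)\<^sup>2
      \<Longrightarrow> i \<in> V \<Longrightarrow> k \<in> V \<Longrightarrow> c i * c k < 0 \<Longrightarrow> lorentz (a i) (a k) = -1"
proof -
  let ?\<alpha> = "\<Sum>i\<in>V. \<bar>c i\<bar> *\<^sub>R a i" and ?S = "\<Sum>i\<in>V. \<bar>c i\<bar>"
  define g where "g i k = (\<bar>c i\<bar> * \<bar>c k\<bar> - c i * c k) * (lorentz (a i) (a k) + 1)" for i k
  have g: "g i k \<le> 0" if "i \<in> V" "k \<in> V" for i k
  proof (cases "c i * c k < 0")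
    case True
    then have "i \<noteq> k" by (metis mult_less_0_iff less_asym)
    then have "lorentz (a i) (a k) + 1 \<le> 0" using packing_familyD(2)[OF fam that] by simp
    then show ?thesis using True by (simp add: g_def mult_nonneg_nonpos)
  next
    case False
    then have "\<bar>c i\<bar> * \<bar>c k\<bar> = c i * c k" by (simp add: abs_mult[symmetric])
    then show ?thesis by (simp add: g_def)
  qed
  \<comment> \<open>Subtracting this vanishing double sum leaves only the pairs of opposite sign.\<close>
  have "(\<Sum>i\<in>V. \<Sum>k\<in>V. c i * c k * (lorentz (a i) (a k) + 1)) = 0"
    using affine_dependence_lorentz_sum[OF dep] by (simp add: mult.assoc sum_distrib_left[symmetric])
  moreover have "lorentz ?\<alpha> ?\<alpha> = (\<Sum>i\<in>V. \<Sum>k\<in>V. \<bar>c i\<bar> * \<bar>c k\<bar> * lorentz (a i) (a k))"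
    by (simp add: lorentz_sum_left lorentz_sum_right lorentz_scaleR_left lorentz_scaleR_right
        sum_distrib_left algebra_simps) (subst sum.swap, simp add: mult.left_commute)
  moreover have "?S\<^sup>2 = (\<Sum>i\<in>V. \<Sum>k\<in>V. \<bar>c i\<bar> * \<bar>c k\<bar>)"
    by (simp add: power2_eq_square sum_product)
  ultimately have key: "lorentz ?\<alpha> ?\<alpha> + ?S\<^sup>2 = (\<Sum>i\<in>V. \<Sum>k\<in>V. g i k)"
    by (simp add: g_def algebra_simps sum_subtractf sum.distrib)
  have rows: "(\<Sum>k\<in>V. g i k) \<le> 0" if "i \<in> V" for i
    using g that by (simp add: sum_nonpos)
  then have "(\<Sum>i\<in>V. \<Sum>k\<in>V. g i k) \<le> 0" by (rule sum_nonpos)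
  then show "lorentz ?\<alpha> ?\<alpha> \<le> - ?S\<^sup>2" using key by linarith
  assume "lorentz ?\<alpha> ?\<alpha> = - ?S\<^sup>2" and ik: "i \<in> V" "k \<in> V" "c i * c k < 0"
  then have "(\<Sum>i\<in>V. - (\<Sum>k\<in>V. g i k)) = 0" using key by (simp add: sum_negf)
  then have "(\<Sum>k\<in>V. - g i k) = 0" using fin rows ik by (subst (asm) sum_nonneg_eq_0_iff) (auto simp: sum_negf)
  then have "g i k = 0" using fin g ik by (subst (asm) sum_nonneg_eq_0_iff) auto
  moreover have "\<bar>c i\<bar> * \<bar>c k\<bar> - c i * c k \<noteq> 0" using ik(3) abs_of_neg[of "c i * c k"] unfolding abs_mult by linarith
  ultimately show "lorentz (a i) (a k) = -1" by (simp add: g_def)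
qed

lemma affine_dependence_same_sign_lt:
  assumes fin: "finite V" and fam: "packing_family V a" and dep: "affine_dependence V a c"
    and i: "i \<in> V" "0 < c i" and k: "k \<in> V" "0 < c k" "i \<noteq> k"
    and others: "\<forall>j\<in>V - {i, k}. lorentz (a i) (a j) = -1"
  shows "lorentz (a i) (a k) < -1"
proof -
  have "(\<Sum>j\<in>V. c j * (lorentz (a i) (a j) + 1)) = (\<Sum>j\<in>{i, k}. c j * (lorentz (a i) (a j) + 1))"
    using fin i k others by (intro sum.mono_neutral_right) auto
  then have "2 * c i + c k * (lorentz (a i) (a k) + 1) = 0"
    using affine_dependence_lorentz_sum[OF dep] fam i k by (simp add: packing_family_def)
  then have "c k * (lorentz (a i) (a k) + 1) < 0" using i by linarith
  then show ?thesis using k by (simp add: mult_less_0_iff)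
qed

lemma affine_dependence_tangency_bipartite:
  assumes fin: "finite V" and card: "card V = 4"
    and fam: "packing_family V a" and dep: "affine_dependence V a c"
    and opposite: "\<forall>i\<in>V. \<forall>k\<in>V. c i * c k < 0 \<longrightarrow> lorentz (a i) (a k) = -1"
    and ik: "i \<in> V" "k \<in> V"
  shows "i \<noteq> k \<and> lorentz (a i) (a k) = -1 \<longleftrightarrow> c i * c k < 0"
proof -
  have same_sign: "lorentz (a i) (a k) < -1"
    if d: "affine_dependence V a d" "\<forall>i\<in>V. \<forall>k\<in>V. d i * d k = c i * c k"
      and "i \<in> V" "k \<in> V" "i \<noteq> k" "0 < d i" "0 < d k" for d i k
  proof -
    have "{i, k} = {j\<in>V. 0 < d j}"
      using that affine_dependence_sign_partition(1)[OF fin card fam d(1)] fin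
      by (intro card_subset_eq) auto
    then have "d j < 0" if "j \<in> V - {i, k}" for j
      using that affine_dependence_sign_partition(3)[OF fin card fam d(1)] by force
    then have "\<forall>j\<in>V - {i, k}. lorentz (a i) (a j) = -1"
      using opposite d(2) \<open>i \<in> V\<close> \<open>0 < d i\<close> mult_pos_neg by (metis DiffD1)
    then show ?thesis using affine_dependence_same_sign_lt[OF fin fam d(1)] that by blast
  qed
  have nz: "c i \<noteq> 0" "c k \<noteq> 0"
    using affine_dependence_sign_partition(3)[OF fin card fam dep] ik by auto
  show ?thesis
  proof (cases "c i * c k < 0")
    case True
    then show ?thesis using opposite ik by auto
  next
    case False
    then have "0 < c i \<and> 0 < c k \<or> 0 < - c i \<and> 0 < - c k"
      using nz by (auto simp: mult_less_0_iff linorder_neq_iff)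
    then have "i \<noteq> k \<Longrightarrow> lorentz (a i) (a k) < -1"
      using same_sign[of c] same_sign[of "\<lambda>j. - c j"] dep affine_dependence_uminus[OF dep] ik
      by auto
    then show ?thesis using False by auto
  qed
qed

section \<open>Two packing families with all cross products -1\<close>

lemma finite_family_linear_dependence:
  fixes f :: "'i \<Rightarrow> 'v::euclidean_space"
  assumes fin: "finite I" and card: "DIM('v) < card I"
  obtains u where "\<exists>i\<in>I. u i \<noteq> 0" and "(\<Sum>i\<in>I. u i *\<^sub>R f i) = 0"
proof (cases "inj_on f I")
  case True
  then have "dependent (f ` I)"
    using card by (intro dependent_biggerset) (simp add: card_image)
  then obtain u' where u': "\<exists>v\<in>f ` I. u' v \<noteq> 0" "(\<Sum>v\<in>f ` I. u' v *\<^sub>R v) = 0"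
    using dependent_finite[of "f ` I"] fin by auto
  have "(\<Sum>i\<in>I. u' (f i) *\<^sub>R f i) = (\<Sum>v\<in>f ` I. u' v *\<^sub>R v)"
    using True by (simp add: sum.reindex)
  then show ?thesis using u' by (intro that[of "u' \<circ> f"]) auto
next
  case False
  then obtain i k where ik: "i \<in> I" "k \<in> I" "i \<noteq> k" "f i = f k"
    unfolding inj_on_def by blast
  define u where "u t = (if t = i then 1 else 0) - (if t = k then 1 else 0 :: real)" for t
  have "(\<Sum>t\<in>I. u t *\<^sub>R f t) = (\<Sum>t\<in>I. if t = i then f t else 0) - (\<Sum>t\<in>I. if t = k then f t else 0)"
    unfolding sum_subtractf[symmetric] by (rule sum.cong) (auto simp: u_def)
  also have "\<dots> = 0" using ik fin by simp
  finally show ?thesis using ik by (intro that[of u]) (auto simp: u_def)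
qed

lemma affine_dependence_of_difference_relation:
  assumes fin: "finite V" and v0: "v0 \<in> V" and P: "P \<subseteq> V - {v0}"
    and rel: "(\<Sum>i\<in>P. u i *\<^sub>R (a i - a v0)) = 0" and nz: "i \<in> P" "u i \<noteq> 0"
  obtains c where "affine_dependence V a c" and "\<forall>k\<in>V - insert v0 P. c k = 0"
proof -
  define c where "c k = (if k \<in> P then u k else 0) - (if k = v0 then sum u P else 0)" for k
  have PV: "V \<inter> P = P" using P by auto
  have "(\<Sum>k\<in>V. c k) = 0"
    using fin v0 by (simp add: c_def sum_subtractf sum.If_cases PV)
  moreover have "(\<Sum>k\<in>V. c k *\<^sub>R a k) = 0"
  proof -
    have "(\<Sum>k\<in>V. c k *\<^sub>R a k) = (\<Sum>k\<in>V. if k \<in> P then u k *\<^sub>R a k else 0)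
        - (\<Sum>k\<in>V. if k = v0 then sum u P *\<^sub>R a v0 else 0)"
      unfolding sum_subtractf[symmetric] by (rule sum.cong) (auto simp: c_def scaleR_diff_left)
    also have "\<dots> = (\<Sum>i\<in>P. u i *\<^sub>R (a i - a v0))"
      using fin v0 by (simp add: sum.If_cases PV scaleR_diff_right sum_subtractf scaleR_sum_left)
    finally show ?thesis using rel by simp
  qed
  moreover have "c i \<noteq> 0" using nz P by (auto simp: c_def)
  ultimately have "affine_dependence V a c" using nz P by (auto simp: affine_dependence_def)
  then show ?thesis by (rule that) (simp add: c_def)
qed

lemma packing_families_cross_differences:
  assumes fin: "finite V" "finite W" and card: "3 \<le> card V" "3 \<le> card W"
    and fam: "packing_family V a" "packing_family W b"
    and cross: "\<forall>i\<in>V. \<forall>j\<in>W. lorentz (a i) (b j) = -1"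
    and v0: "v0 \<in> V" and w0: "w0 \<in> W" and P: "P \<subseteq> V" and Q: "Q \<subseteq> W"
    and e: "lorentz e e < 0"
    and sum: "(\<Sum>i\<in>P. u i *\<^sub>R (a i - a v0)) + (\<Sum>j\<in>Q. w j *\<^sub>R (b j - b w0)) = t *\<^sub>R e"
  shows "(\<Sum>i\<in>P. u i *\<^sub>R (a i - a v0)) = 0" and "(\<Sum>j\<in>Q. w j *\<^sub>R (b j - b w0)) = 0" and "t = 0"
proof -
  define X where "X = (\<Sum>i\<in>P. u i *\<^sub>R (a i - a v0))"
  define Y where "Y = (\<Sum>j\<in>Q. w j *\<^sub>R (b j - b w0))"
  have Xb: "lorentz X (b j) = 0" if "j \<in> W" for j
    unfolding X_def using cross v0 that P by (intro lorentz_difference_combination) auto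
  have Ya: "lorentz Y (a i) = 0" if "i \<in> V" for i
    unfolding Y_def using cross w0 that Q
    by (intro lorentz_difference_combination) (auto simp: lorentz_comm)
  have XY: "lorentz X Y = 0"
    unfolding Y_def using Xb w0 Q
    by (subst lorentz_comm, intro lorentz_difference_combination) (auto simp: lorentz_comm)
  have Xs: "lorentz X (\<Sum>j\<in>W. b j) = 0" and Yt: "lorentz Y (\<Sum>i\<in>V. a i) = 0"
    using Xb Ya by (simp_all add: lorentz_sum_right)
  from lorentz_orthogonal_sum_eq_timelike[OF packing_family_sum_timelike[OF fin(2) card(2) fam(2)]
      packing_family_sum_timelike[OF fin(1) card(1) fam(1)] e Xs Yt XY sum[folded X_def Y_def]]
  show "X = 0" "Y = 0" "t = 0" by blast+
qed

lemma packing_families_cross_dependence_cases: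
  assumes fin: "finite V" "finite W" and card: "3 \<le> card V" "3 \<le> card W"
    and fam: "packing_family V a" "packing_family W b"
    and cross: "\<forall>i\<in>V. \<forall>j\<in>W. lorentz (a i) (b j) = -1"
    and v0: "v0 \<in> V" and w0: "w0 \<in> W" and P: "P \<subseteq> V - {v0}" and Q: "Q \<subseteq> W - {w0}"
    and PQ: "5 \<le> card P + card Q"
  shows "(\<exists>c. affine_dependence V a c \<and> (\<forall>i\<in>V - insert v0 P. c i = 0))
    \<or> (\<exists>d. affine_dependence W b d)"
proof -
  have finPQ: "finite P" "finite Q" using P Q fin by (auto intro: finite_subset)
  define e :: lorentz_vec where "e = (0, 0, 1)"
  have "lorentz e e < 0" by (simp add: e_def lorentz_def)
  define f :: "('a + 'b) option \<Rightarrow> lorentz_vec" where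
    "f t = (case t of None \<Rightarrow> e | Some (Inl i) \<Rightarrow> a i - a v0 | Some (Inr j) \<Rightarrow> b j - b w0)"
    for t
  define I where "I = insert None (Some ` (P <+> Q))"
  have "finite I" using finPQ by (simp add: I_def)
  moreover have "DIM(lorentz_vec) < card I"
    using finPQ PQ by (simp add: I_def card_insert_disjoint card_image card_Plus)
  ultimately obtain u where u: "\<exists>t\<in>I. u t \<noteq> 0" "(\<Sum>t\<in>I. u t *\<^sub>R f t) = 0"
    by (rule finite_family_linear_dependence)
  have "(\<Sum>t\<in>I. u t *\<^sub>R f t) = u None *\<^sub>R e
      + ((\<Sum>i\<in>P. u (Some (Inl i)) *\<^sub>R (a i - a v0)) + (\<Sum>j\<in>Q. u (Some (Inr j)) *\<^sub>R (b j - b w0)))"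
    using finPQ by (simp add: I_def sum.reindex sum.Plus f_def o_def)
  then have sum_eq: "(\<Sum>i\<in>P. u (Some (Inl i)) *\<^sub>R (a i - a v0))
      + (\<Sum>j\<in>Q. u (Some (Inr j)) *\<^sub>R (b j - b w0)) = (- u None) *\<^sub>R e"
    using u(2) by (simp add: eq_neg_iff_add_eq_0 add.commute)
  have PV: "P \<subseteq> V" and QW: "Q \<subseteq> W" using P Q by auto
  note zero = packing_families_cross_differences[OF fin card fam cross v0 w0 PV QW \<open>lorentz e e < 0\<close> sum_eq]
  obtain s where s: "Some s \<in> I" "u (Some s) \<noteq> 0" using u(1) zero(3) by (auto simp: I_def)
  show ?thesis
  proof (cases s)
    case (Inl i)
    with s have "i \<in> P" "u (Some (Inl i)) \<noteq> 0" by (auto simp: I_def)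
    then obtain c where "affine_dependence V a c" "\<forall>k\<in>V - insert v0 P. c k = 0"
      using affine_dependence_of_difference_relation[OF fin(1) v0 P, where u = "\<lambda>i. u (Some (Inl i))"]
        zero(1) by blast
    then show ?thesis by blast
  next
    case (Inr j)
    with s have "j \<in> Q" "u (Some (Inr j)) \<noteq> 0" by (auto simp: I_def)
    then obtain d where "affine_dependence W b d"
      using affine_dependence_of_difference_relation[OF fin(2) w0 Q, where u = "\<lambda>j. u (Some (Inr j))"]
        zero(2) by blast
    then show ?thesis by blast
  qed
qed

lemma packing_families_cross_affine_dependence:
  assumes V: "finite V" "card V = 4" and W: "finite W" "card W = 4"
    and fam: "packing_family V a" "packing_family W b"
    and cross: "\<forall>i\<in>V. \<forall>j\<in>W. lorentz (a i) (b j) = -1"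
  obtains d where "affine_dependence W b d"
proof -
  obtain v0 where v0: "v0 \<in> V" using V by (metis all_not_in_conv card.empty zero_neq_numeral)
  then have "card (V - {v0}) = 3" using V by simp
  then obtain v1 where v1: "v1 \<in> V" "v1 \<noteq> v0" by (metis all_not_in_conv card.empty zero_neq_numeral DiffE singletonI)
  obtain w0 where w0: "w0 \<in> W" using W by (metis all_not_in_conv card.empty zero_neq_numeral)
  let ?P = "V - {v0, v1}"
  have "\<not> (\<exists>c. affine_dependence V a c \<and> (\<forall>i\<in>V - insert v0 ?P. c i = 0))"
  proof
    assume "\<exists>c. affine_dependence V a c \<and> (\<forall>i\<in>V - insert v0 ?P. c i = 0)"
    then obtain c where c: "affine_dependence V a c" "\<forall>i\<in>V - insert v0 ?P. c i = 0" by blast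
    have "c v1 = 0" using c(2) v1 by blast
    moreover have "c v1 \<noteq> 0" using affine_dependence_sign_partition(3)[OF V fam(1) c(1)] v1(1) by blast
    ultimately show False by contradiction
  qed
  moreover have "(\<exists>c. affine_dependence V a c \<and> (\<forall>i\<in>V - insert v0 ?P. c i = 0))
      \<or> (\<exists>d. affine_dependence W b d)"
  proof (rule packing_families_cross_dependence_cases[OF V(1) W(1) _ _ fam cross v0 w0])
    show "3 \<le> card V" "3 \<le> card W" using V W by simp_all
    show "?P \<subseteq> V - {v0}" "W - {w0} \<subseteq> W - {w0}" by blast+
    have "card ?P = 2" using V v0 v1 by (simp add: card_Diff_subset)
    moreover have "card (W - {w0}) = 3" using W w0 by simp
    ultimately show "5 \<le> card ?P + card (W - {w0})" by simp
  qed
  ultimately show ?thesis using that by blast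
qed

lemma less_4_cases: "(i::nat) < 4 \<Longrightarrow> i = 0 \<or> i = 1 \<or> i = 2 \<or> i = 3"
  by (simp add: eval_nat_numeral less_Suc_eq)

lemma C4_edges_iff_odd:
  assumes "i < 4" "j < 4"
  shows "C4_edges i j \<longleftrightarrow> odd (i + j)"
  by (insert less_4_cases[OF assms(1)] less_4_cases[OF assms(2)]) (elim disjE; simp add: C4_edges_def)

lemma C4_verts_eq: "C4_verts = {0, 1, 2, 3}"
  using less_4_cases by (auto simp: C4_verts_def)

lemma graph_iso_C4_bipartite:
  assumes P: "card {x\<in>V. s x} = 2" and N: "card {x\<in>V. \<not> s x} = 2"
    and E: "\<forall>x\<in>V. \<forall>y\<in>V. E x y \<longleftrightarrow> (s x \<longleftrightarrow> \<not> s y)"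
  shows "graph_iso V E C4_verts C4_edges"
proof -
  obtain p1 p2 where p: "{x\<in>V. s x} = {p1, p2}" "p1 \<noteq> p2" using P by (auto simp: card_2_iff)
  obtain n1 n2 where n: "{x\<in>V. \<not> s x} = {n1, n2}" "n1 \<noteq> n2" using N by (auto simp: card_2_iff)
  have "V = {x\<in>V. s x} \<union> {x\<in>V. \<not> s x}" by blast
  then have V: "V = {p1, p2, n1, n2}" unfolding p n by auto
  have s: "s p1" "s p2" "\<not> s n1" "\<not> s n2"
    using p(1) n(1) by (metis (mono_tags, lifting) insertCI mem_Collect_eq)+
  define f :: "_ \<Rightarrow> nat" where
    "f x = (if x = p1 then 0 else if x = n1 then 1 else if x = p2 then 2 else 3)" for x
  have f: "f p1 = 0" "f n1 = 1" "f p2 = 2" "f n2 = 3" using p(2) n(2) s by (auto simp: f_def)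
  have "inj_on f V" unfolding V inj_on_def using f by auto
  moreover have "f ` V = C4_verts" unfolding V C4_verts_eq using f by auto
  moreover have "E x y \<longleftrightarrow> C4_edges (f x) (f y)" if "x \<in> V" "y \<in> V" for x y
  proof -
    have "f x < 4" "f y < 4" "even (f x) \<longleftrightarrow> s x" "even (f y) \<longleftrightarrow> s y"
      using that f s unfolding V by auto
    then show ?thesis using E that by (simp add: C4_edges_iff_odd)
  qed
  ultimately show ?thesis unfolding graph_iso_def bij_betw_def by blast
qed

lemma packing_families_cross_opposite_signs:
  assumes V: "finite V" and W: "finite W"
    and fam: "packing_family V a" "packing_family W b"
    and cross: "\<forall>i\<in>V. \<forall>j\<in>W. lorentz (a i) (b j) = -1"
    and c: "affine_dependence V a c" and d: "affine_dependence W b d"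
  shows "\<forall>i\<in>V. \<forall>k\<in>V. c i * c k < 0 \<longrightarrow> lorentz (a i) (a k) = -1"
proof -
  define \<alpha> S where "\<alpha> = (\<Sum>i\<in>V. \<bar>c i\<bar> *\<^sub>R a i)" and "S = (\<Sum>i\<in>V. \<bar>c i\<bar>)"
  define \<beta> T where "\<beta> = (\<Sum>j\<in>W. \<bar>d j\<bar> *\<^sub>R b j)" and "T = (\<Sum>j\<in>W. \<bar>d j\<bar>)"
  have "0 < S" "0 < T"
    unfolding S_def T_def using affine_dependence_abs_sum_pos V W c d by blast+
  have "lorentz \<alpha> \<beta> = (\<Sum>i\<in>V. \<Sum>j\<in>W. \<bar>c i\<bar> * \<bar>d j\<bar> * lorentz (a i) (b j))"
    by (simp add: \<alpha>_def \<beta>_def lorentz_sum_left lorentz_sum_right lorentz_scaleR_left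
        lorentz_scaleR_right sum_distrib_left mult.assoc) (subst sum.swap, simp add: mult.left_commute)
  also have "\<dots> = - (S * T)"
    using cross by (simp add: S_def T_def sum_product sum_negf)
  finally have \<alpha>\<beta>: "lorentz \<alpha> \<beta> = - (S * T)" .
  have \<alpha>\<alpha>: "lorentz \<alpha> \<alpha> \<le> - S\<^sup>2" and \<beta>\<beta>: "lorentz \<beta> \<beta> \<le> - T\<^sup>2"
    unfolding \<alpha>_def \<beta>_def S_def T_def
    using affine_dependence_abs_combination(1) V W fam c d by blast+
  have "lorentz \<alpha> \<alpha> < 0" using \<alpha>\<alpha> zero_less_power[OF \<open>0 < S\<close>, of 2] by linarith
  then have "lorentz \<alpha> \<alpha> * lorentz \<beta> \<beta> \<le> S\<^sup>2 * T\<^sup>2"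
    using lorentz_reverse_Cauchy_Schwarz[of \<alpha> \<beta>] \<alpha>\<beta> by (simp add: power_mult_distrib)
  moreover have "S\<^sup>2 * T\<^sup>2 \<le> - lorentz \<alpha> \<alpha> * T\<^sup>2"
    using \<alpha>\<alpha> by (intro mult_right_mono) auto
  moreover have "- lorentz \<alpha> \<alpha> * T\<^sup>2 \<le> - lorentz \<alpha> \<alpha> * - lorentz \<beta> \<beta>"
    using \<alpha>\<alpha> \<beta>\<beta> \<open>lorentz \<alpha> \<alpha> < 0\<close> by (intro mult_left_mono) auto
  ultimately have "- lorentz \<alpha> \<alpha> * T\<^sup>2 \<le> S\<^sup>2 * T\<^sup>2" by simp
  then have "- lorentz \<alpha> \<alpha> \<le> S\<^sup>2" using \<open>0 < T\<close> by (simp add: mult_right_le_imp_le)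
  then have "lorentz \<alpha> \<alpha> = - S\<^sup>2" using \<alpha>\<alpha> by linarith
  then show ?thesis
    using affine_dependence_abs_combination(2)[OF V fam(1) c] unfolding \<alpha>_def S_def by blast
qed

lemma packing_families_cross_C4:
  assumes V: "finite V" "card V = 4" and W: "finite W" "card W = 4"
    and fam: "packing_family V a" "packing_family W b"
    and cross: "\<forall>i\<in>V. \<forall>j\<in>W. lorentz (a i) (b j) = -1"
    and E: "\<forall>i\<in>V. \<forall>k\<in>V. E i k \<longleftrightarrow> i \<noteq> k \<and> lorentz (a i) (a k) = -1"
  shows "graph_iso V E C4_verts C4_edges"
proof -
  have cross': "\<forall>j\<in>W. \<forall>i\<in>V. lorentz (b j) (a i) = -1" using cross by (simp add: lorentz_comm)
  obtain c where c: "affine_dependence V a c"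
    using packing_families_cross_affine_dependence[OF W V fam(2,1) cross'] .
  obtain d where d: "affine_dependence W b d"
    using packing_families_cross_affine_dependence[OF V W fam cross] .
  note opposite = packing_families_cross_opposite_signs[OF V(1) W(1) fam cross c d]
  have nz: "\<forall>i\<in>V. c i \<noteq> 0" and pos: "card {i\<in>V. 0 < c i} = 2" and neg: "card {i\<in>V. c i < 0} = 2"
    using affine_dependence_sign_partition[OF V fam(1) c] by blast+
  show ?thesis
  proof (rule graph_iso_C4_bipartite[where s = "\<lambda>i. 0 < c i"])
    have "{i\<in>V. \<not> 0 < c i} = {i\<in>V. c i < 0}" using nz by force
    then show "card {i\<in>V. \<not> 0 < c i} = 2" using neg by simp
    show "\<forall>x\<in>V. \<forall>y\<in>V. E x y \<longleftrightarrow> (0 < c x \<longleftrightarrow> \<not> 0 < c y)"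
    proof (intro ballI)
      fix x y assume xy: "x \<in> V" "y \<in> V"
      then have "E x y \<longleftrightarrow> c x * c y < 0"
        using E affine_dependence_tangency_bipartite[OF V fam(1) c opposite xy] by simp
      then show "E x y \<longleftrightarrow> (0 < c x \<longleftrightarrow> \<not> 0 < c y)"
        using nz xy by (auto simp: mult_less_0_iff linorder_neq_iff)
    qed
  qed (rule pos)
qed

section \<open>Tangency of Euclidean balls and half-spaces\<close>

lemma dist_segment_point:
  fixes a b :: "'a::real_normed_vector"
  shows "dist a (a + t *\<^sub>R (b - a)) = \<bar>t\<bar> * dist a b"
    and "dist (a + t *\<^sub>R (b - a)) b = \<bar>1 - t\<bar> * dist a b"
proof -
  have "a - (a + t *\<^sub>R (b - a)) = t *\<^sub>R (a - b)" "a + t *\<^sub>R (b - a) - b = (1 - t) *\<^sub>R (a - b)"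
    by (simp_all add: algebra_simps)
  then show "dist a (a + t *\<^sub>R (b - a)) = \<bar>t\<bar> * dist a b"
    and "dist (a + t *\<^sub>R (b - a)) b = \<bar>1 - t\<bar> * dist a b"
    by (simp_all add: dist_norm)
qed

lemma dist_add_eq_imp_segment_point:
  fixes a b x :: "'a::euclidean_space"
  assumes "dist a b = dist a x + dist x b" and "a \<noteq> b"
  shows "x = a + (dist a x / dist a b) *\<^sub>R (b - a)"
proof -
  obtain u where u: "0 \<le> u" "x = (1 - u) *\<^sub>R a + u *\<^sub>R b"
    using assms(1) by (metis between betweenE)
  then have x: "x = a + u *\<^sub>R (b - a)" by (simp add: algebra_simps)
  then have "dist a x = u * dist a b" using u(1) dist_segment_point(1)[of a u b] by simp
  then show ?thesis using x assms(2) by simp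
qed

lemma ball_Int_ball_empty_imp_dist_ge:
  fixes c1 c2 :: "'a::euclidean_space"
  assumes r: "0 < r1" "0 < r2" and disj: "ball c1 r1 \<inter> ball c2 r2 = {}"
  shows "r1 + r2 \<le> dist c1 c2"
proof (rule ccontr)
  assume "\<not> ?thesis"
  then have d: "dist c1 c2 < r1 + r2" by simp
  define t where "t = r1 / (r1 + r2)"
  have t: "0 \<le> t" "\<bar>1 - t\<bar> = r2 / (r1 + r2)" using r by (auto simp: t_def field_simps)
  let ?p = "c1 + t *\<^sub>R (c2 - c1)"
  have "dist c1 ?p = t * dist c1 c2" using t(1) by (simp add: dist_segment_point)
  also have "\<dots> < r1" using mult_strict_left_mono[OF d r(1)] r by (simp add: t_def field_simps)
  finally have "dist c1 ?p < r1" .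
  moreover have "dist c2 ?p = r2 / (r1 + r2) * dist c1 c2"
    using t(2) by (simp add: dist_segment_point dist_commute[of c2])
  moreover have "r2 / (r1 + r2) * dist c1 c2 < r2"
    using mult_strict_left_mono[OF d r(2)] r by (simp add: field_simps)
  ultimately show False using disj by auto
qed

lemma unique_cball_Int_cball_iff:
  fixes c1 c2 :: "'a::euclidean_space"
  assumes r: "0 < r1" "0 < r2" and ge: "r1 + r2 \<le> dist c1 c2"
  shows "(\<exists>!x. x \<in> cball c1 r1 \<inter> cball c2 r2) \<longleftrightarrow> dist c1 c2 = r1 + r2"
proof
  assume "\<exists>!x. x \<in> cball c1 r1 \<inter> cball c2 r2"
  then obtain x where "dist c1 x \<le> r1" "dist x c2 \<le> r2" by (auto simp: dist_commute)
  then show "dist c1 c2 = r1 + r2" using ge dist_triangle[of c1 c2 x] by linarith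
next
  assume d: "dist c1 c2 = r1 + r2"
  then have "c1 \<noteq> c2" using r by auto
  let ?p = "c1 + (r1 / dist c1 c2) *\<^sub>R (c2 - c1)"
  show "\<exists>!x. x \<in> cball c1 r1 \<inter> cball c2 r2"
  proof (rule ex1I[of _ ?p])
    have "\<bar>1 - r1 / dist c1 c2\<bar> = r2 / dist c1 c2" using d r by (simp add: field_simps)
    then show "?p \<in> cball c1 r1 \<inter> cball c2 r2"
      using d r by (simp add: dist_segment_point dist_commute[of c2])
  next
    fix x assume "x \<in> cball c1 r1 \<inter> cball c2 r2"
    then have "dist c1 x \<le> r1" "dist x c2 \<le> r2" by (auto simp: dist_commute)
    then have "dist c1 x = r1" "dist c1 c2 = dist c1 x + dist x c2"
      using d dist_triangle[of c1 c2 x] by linarith+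
    then show "x = ?p" using dist_add_eq_imp_segment_point \<open>c1 \<noteq> c2\<close> by metis
  qed
qed

lemma unique_cball_Int_outside_ball_iff:
  fixes c e :: "'a::euclidean_space"
  assumes r: "0 < r" and le: "dist c e + r \<le> R"
  shows "(\<exists>!x. x \<in> cball c r \<inter> - ball e R) \<longleftrightarrow> dist c e + r = R \<and> c \<noteq> e"
proof
  assume uniq: "\<exists>!x. x \<in> cball c r \<inter> - ball e R"
  then obtain x where "dist c x \<le> r" "R \<le> dist e x" by auto
  then have eq: "dist c e + r = R"
    using le dist_triangle[of e x c] by (simp add: dist_commute)
  have "c \<noteq> e"
  proof
    assume "c = e"
    obtain v :: 'a where "v \<in> Basis" using nonempty_Basis by blast
    then have "c + r *\<^sub>R v \<in> cball c r \<inter> - ball e R" "c - r *\<^sub>R v \<in> cball c r \<inter> - ball e R"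
      and "c + r *\<^sub>R v \<noteq> c - r *\<^sub>R v"
      using \<open>c = e\<close> eq r by (auto simp: dist_norm eq_neg_iff_add_eq_0 scaleR_2[symmetric])
    then show False using uniq by blast
  qed
  then show "dist c e + r = R \<and> c \<noteq> e" using eq by blast
next
  assume "dist c e + r = R \<and> c \<noteq> e"
  then have R: "R = dist e c + r" and d: "0 < dist e c" by (auto simp: dist_commute)
  let ?p = "e + (R / dist e c) *\<^sub>R (c - e)"
  show "\<exists>!x. x \<in> cball c r \<inter> - ball e R"
  proof (rule ex1I[of _ ?p])
    have "\<bar>1 - R / dist e c\<bar> * dist e c = r" using R d r by (simp add: field_simps)
    then show "?p \<in> cball c r \<inter> - ball e R"
      using R d r by (simp add: dist_segment_point dist_commute[of c])
  next
    fix x assume "x \<in> cball c r \<inter> - ball e R"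
    then have "dist c x \<le> r" "R \<le> dist e x" by auto
    then have ex: "dist e x = R" "dist e x = dist e c + dist c x"
      using R dist_triangle[of e x c] by (simp_all add: dist_commute)
    have "0 < dist e x" using ex(1) R d r by linarith
    then have "e \<noteq> x" by auto
    then have "c = e + (dist e c / R) *\<^sub>R (x - e)"
      using dist_add_eq_imp_segment_point[OF ex(2)] ex(1) by simp
    then have "c - e = (dist e c / R) *\<^sub>R (x - e)" by (metis add_diff_cancel_left')
    moreover have "(R / dist e c) * (dist e c / R) = 1" using \<open>0 < dist e x\<close> ex(1) d by simp
    ultimately have "x - e = (R / dist e c) *\<^sub>R (c - e)" by simp
    then show "x = ?p" by (simp add: algebra_simps)
  qed
qed

lemma ball_Int_halfspace_empty_imp_le:
  fixes a c :: "'a::euclidean_space"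
  assumes r: "0 < r" and a: "a \<noteq> 0" and disj: "ball c r \<inter> {x. a \<bullet> x < h} = {}"
  shows "h \<le> a \<bullet> c - r * norm a"
proof -
  have "ball c r \<subseteq> {x. h \<le> a \<bullet> x}" using disj by auto
  then have "closure (ball c r) \<subseteq> {x. h \<le> a \<bullet> x}" by (rule closure_minimal) (rule closed_halfspace_ge)
  moreover have "c - (r / norm a) *\<^sub>R a \<in> closure (ball c r)" using r a by (simp add: dist_norm)
  ultimately have "h \<le> a \<bullet> (c - (r / norm a) *\<^sub>R a)" by blast
  then show ?thesis using a by (simp add: inner_diff_right dot_square_norm power2_eq_square)
qed

lemma unique_cball_Int_halfspace_iff:
  fixes a c :: "'a::euclidean_space"
  assumes r: "0 < r" and a: "a \<noteq> 0" and ge: "h \<le> a \<bullet> c - r * norm a"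
  shows "(\<exists>!x. x \<in> cball c r \<inter> {x. a \<bullet> x \<le> h}) \<longleftrightarrow> a \<bullet> c - r * norm a = h"
proof
  assume "\<exists>!x. x \<in> cball c r \<inter> {x. a \<bullet> x \<le> h}"
  then obtain x where x: "norm (c - x) \<le> r" "a \<bullet> x \<le> h" by (auto simp: dist_norm)
  have "a \<bullet> (c - x) \<le> norm a * norm (c - x)" by (rule norm_cauchy_schwarz)
  also have "\<dots> \<le> norm a * r" using x by (intro mult_left_mono) auto
  finally show "a \<bullet> c - r * norm a = h" using x ge by (simp add: inner_diff_right algebra_simps)
next
  assume eq: "a \<bullet> c - r * norm a = h"
  let ?p = "c - (r / norm a) *\<^sub>R a"
  show "\<exists>!x. x \<in> cball c r \<inter> {x. a \<bullet> x \<le> h}"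
  proof (rule ex1I[of _ ?p])
    show "?p \<in> cball c r \<inter> {x. a \<bullet> x \<le> h}"
      using r a eq by (simp add: dist_norm inner_diff_right dot_square_norm power2_eq_square)
  next
    fix x assume "x \<in> cball c r \<inter> {x. a \<bullet> x \<le> h}"
    then have x: "norm (c - x) \<le> r" "a \<bullet> x \<le> h" by (auto simp: dist_norm)
    have "a \<bullet> (c - x) \<le> norm a * norm (c - x)" by (rule norm_cauchy_schwarz)
    moreover have "norm a * norm (c - x) \<le> norm a * r" using x by (intro mult_left_mono) auto
    moreover have "norm a * r \<le> a \<bullet> (c - x)" using x eq by (simp add: inner_diff_right algebra_simps)
    ultimately have cs: "a \<bullet> (c - x) = norm a * norm (c - x)"
      and "norm a * norm (c - x) = norm a * r" by linarith+
    with a have "norm (c - x) = r" by simp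
    then have "norm a *\<^sub>R (c - x) = r *\<^sub>R a" using cs norm_cauchy_schwarz_eq[of a "c - x"] by simp
    then have "norm a *\<^sub>R x = norm a *\<^sub>R c - r *\<^sub>R a" by (simp add: algebra_simps)
    also have "\<dots> = norm a *\<^sub>R ?p" using a by (simp add: scaleR_diff_right)
    finally have "norm a *\<^sub>R x = norm a *\<^sub>R ?p" .
    then show "x = ?p" using a by simp
  qed
qed

section \<open>Inversive coordinates of 3-balls\<close>

(* Inversive coordinates of the sphere bounding cball c r, oriented towards the ball.
   halfspace_coords a h is their limit for balls inside {x. a \<bullet> x \<le> h} touching its
   boundary at a fixed point, as the radius tends to infinity. *)
definition sphere_coords :: "real^3 \<Rightarrow> real \<Rightarrow> lorentz_vec" where
  "sphere_coords c r =
     ((1 / r) *\<^sub>R c, (norm c ^ 2 - r ^ 2 - 1) / (2 * r), (norm c ^ 2 - r ^ 2 + 1) / (2 * r))"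

definition halfspace_coords :: "real^3 \<Rightarrow> real \<Rightarrow> lorentz_vec" where
  "halfspace_coords a h = (- (1 / norm a) *\<^sub>R a, - h / norm a, - h / norm a)"

fun inversive_coords :: "ball3 \<Rightarrow> lorentz_vec" where
  "inversive_coords (CBall c r) = sphere_coords c r"
| "inversive_coords (Exterior c r) = - sphere_coords c r"
| "inversive_coords (HalfSpace a h) = halfspace_coords a h"

definition bend :: "lorentz_vec \<Rightarrow> real" where
  "bend u = time_part u - fst (snd u)"

lemma bend_uminus: "bend (- u) = - bend u"
  by (simp add: bend_def time_part_def)

lemma bend_sphere_coords: "0 < r \<Longrightarrow> bend (sphere_coords c r) = 1 / r"
  by (simp add: bend_def sphere_coords_def time_part_def field_simps)

lemma bend_halfspace_coords: "bend (halfspace_coords a h) = 0"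
  by (simp add: bend_def halfspace_coords_def time_part_def)

lemma neq_uminus_sphere_coords: "0 < r \<Longrightarrow> 0 \<le> bend u \<Longrightarrow> u \<noteq> - sphere_coords c r"
  by (auto simp: bend_uminus bend_sphere_coords)

lemma lorentz_sphere_coords:
  assumes "0 < r1" "0 < r2"
  shows "lorentz (sphere_coords c1 r1) (sphere_coords c2 r2) = (r1\<^sup>2 + r2\<^sup>2 - (dist c1 c2)\<^sup>2) / (2 * r1 * r2)"
proof -
  have d: "(dist c1 c2)\<^sup>2 = (norm c1)\<^sup>2 + (norm c2)\<^sup>2 - 2 * (c1 \<bullet> c2)"
    by (simp add: dist_norm power2_norm_eq_inner inner_diff_left inner_diff_right inner_commute)
  show ?thesis using assms unfolding d
    by (simp add: lorentz_def sphere_coords_def field_simps power2_eq_square)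
qed

lemma lorentz_sphere_coords_halfspace_coords:
  assumes "0 < r" "a \<noteq> 0"
  shows "lorentz (sphere_coords c r) (halfspace_coords a h) = (h - a \<bullet> c) / (r * norm a)"
  using assms
  by (simp add: lorentz_def sphere_coords_def halfspace_coords_def field_simps inner_commute power2_eq_square)

lemma sphere_coords_eq_iff:
  assumes "0 < r" "0 < R"
  shows "sphere_coords c r = sphere_coords e R \<longleftrightarrow> c = e \<and> r = R"
proof
  assume eq: "sphere_coords c r = sphere_coords e R"
  then have "1 / r = 1 / R" using bend_sphere_coords assms by metis
  then have "r = R" by simp
  moreover have "(1 / r) *\<^sub>R c = (1 / R) *\<^sub>R e" using eq by (simp add: sphere_coords_def)
  ultimately show "c = e \<and> r = R" using assms by simp
qed simp

lemma inversive_coords_unit: "valid_ball3 B \<Longrightarrow> lorentz (inversive_coords B) (inversive_coords B) = 1"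
proof (induction B)
  case (HalfSpace a h)
  then show ?case by (simp add: lorentz_def halfspace_coords_def dot_square_norm power2_eq_square field_simps)
qed (simp_all add: lorentz_sphere_coords lorentz_minus_left lorentz_minus_right power2_eq_square)

lemma Some_image_Int: "Some ` A \<inter> Some ` B = Some ` (A \<inter> B)"
  by auto

lemma Some_image_Int_insert_None: "Some ` A \<inter> insert None (Some ` B) = Some ` (A \<inter> B)"
  by auto

lemma ex1_mem_Some_image: "(\<exists>!p. p \<in> Some ` A) \<longleftrightarrow> (\<exists>!x. x \<in> A)"
  by (auto simp: Ex1_def)

lemma CBall_CBall_inversive:
  assumes r: "0 < r1" "0 < r2" and disj: "ball c1 r1 \<inter> ball c2 r2 = {}"
  shows "lorentz (sphere_coords c1 r1) (sphere_coords c2 r2) \<le> -1"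
    and "tangent3 (CBall c1 r1) (CBall c2 r2) \<longleftrightarrow> lorentz (sphere_coords c1 r1) (sphere_coords c2 r2) = -1"
proof -
  let ?d = "dist c1 c2"
  have d: "r1 + r2 \<le> ?d" using ball_Int_ball_empty_imp_dist_ge[OF r disj] .
  have L: "lorentz (sphere_coords c1 r1) (sphere_coords c2 r2) + 1 = ((r1 + r2)\<^sup>2 - ?d\<^sup>2) / (2 * r1 * r2)"
    using r by (simp add: lorentz_sphere_coords field_simps power2_eq_square)
  have "(r1 + r2)\<^sup>2 \<le> ?d\<^sup>2" using d r by (intro power_mono) auto
  then have "((r1 + r2)\<^sup>2 - ?d\<^sup>2) / (2 * r1 * r2) \<le> 0" using r by (intro divide_nonpos_pos) auto
  then show "lorentz (sphere_coords c1 r1) (sphere_coords c2 r2) \<le> -1" using L by linarith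
  have "tangent3 (CBall c1 r1) (CBall c2 r2) \<longleftrightarrow> ?d = r1 + r2"
    unfolding tangent3_def ball3_set.simps Some_image_Int ex1_mem_Some_image
    using unique_cball_Int_cball_iff[OF r d] .
  also have "\<dots> \<longleftrightarrow> ((r1 + r2)\<^sup>2 - ?d\<^sup>2) / (2 * r1 * r2) = 0"
    using r by (auto simp: power2_eq_iff_nonneg)
  also have "\<dots> \<longleftrightarrow> lorentz (sphere_coords c1 r1) (sphere_coords c2 r2) = -1"
    unfolding L[symmetric] by linarith
  finally show "tangent3 (CBall c1 r1) (CBall c2 r2) \<longleftrightarrow> lorentz (sphere_coords c1 r1) (sphere_coords c2 r2) = -1" .
qed

lemma CBall_Exterior_inversive:
  assumes r: "0 < r" "0 < R" and disj: "ball c r \<inter> - cball e R = {}"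
  shows "lorentz (sphere_coords c r) (- sphere_coords e R) \<le> -1"
    and "tangent3 (CBall c r) (Exterior e R) \<longleftrightarrow>
      lorentz (sphere_coords c r) (- sphere_coords e R) = -1 \<and> sphere_coords e R \<noteq> sphere_coords c r"
proof -
  let ?d = "dist c e"
  have le: "?d + r \<le> R" using disj r ball_subset_cball_iff[of c r e R] by auto
  have L: "lorentz (sphere_coords c r) (- sphere_coords e R) + 1 = (?d\<^sup>2 - (R - r)\<^sup>2) / (2 * r * R)"
    using r by (simp add: lorentz_minus_right lorentz_sphere_coords field_simps power2_eq_square)
  have "?d\<^sup>2 \<le> (R - r)\<^sup>2" using le by (intro power_mono) auto
  then have "(?d\<^sup>2 - (R - r)\<^sup>2) / (2 * r * R) \<le> 0" using r by (intro divide_nonpos_pos) auto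
  then show "lorentz (sphere_coords c r) (- sphere_coords e R) \<le> -1" using L by linarith
  have "tangent3 (CBall c r) (Exterior e R) \<longleftrightarrow> ?d + r = R \<and> c \<noteq> e"
    unfolding tangent3_def ball3_set.simps Some_image_Int_insert_None ex1_mem_Some_image
    using unique_cball_Int_outside_ball_iff[OF r(1) le] .
  also have "\<dots> \<longleftrightarrow> (?d\<^sup>2 - (R - r)\<^sup>2) / (2 * r * R) = 0 \<and> sphere_coords e R \<noteq> sphere_coords c r"
  proof -
    have "0 \<le> R - r" using le zero_le_dist[of c e] by linarith
    then have "?d + r = R \<longleftrightarrow> ?d\<^sup>2 = (R - r)\<^sup>2" by (auto simp: power2_eq_iff_nonneg)
    moreover have "?d + r = R \<Longrightarrow> c \<noteq> e \<longleftrightarrow> sphere_coords e R \<noteq> sphere_coords c r"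
      using sphere_coords_eq_iff[OF r(2,1), of e c] by auto
    ultimately show ?thesis using r by auto
  qed
  also have "\<dots> \<longleftrightarrow> lorentz (sphere_coords c r) (- sphere_coords e R) = -1 \<and> sphere_coords e R \<noteq> sphere_coords c r"
    unfolding L[symmetric] by linarith
  finally show "tangent3 (CBall c r) (Exterior e R) \<longleftrightarrow>
      lorentz (sphere_coords c r) (- sphere_coords e R) = -1 \<and> sphere_coords e R \<noteq> sphere_coords c r" .
qed

lemma CBall_HalfSpace_inversive:
  assumes r: "0 < r" and a: "a \<noteq> 0" and disj: "ball c r \<inter> {x. a \<bullet> x < h} = {}"
  shows "lorentz (sphere_coords c r) (halfspace_coords a h) \<le> -1"
    and "tangent3 (CBall c r) (HalfSpace a h) \<longleftrightarrow> lorentz (sphere_coords c r) (halfspace_coords a h) = -1"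
proof -
  have ge: "h \<le> a \<bullet> c - r * norm a" using ball_Int_halfspace_empty_imp_le[OF r a disj] .
  have L: "lorentz (sphere_coords c r) (halfspace_coords a h) + 1 = (h - (a \<bullet> c - r * norm a)) / (r * norm a)"
    using r a by (simp add: lorentz_sphere_coords_halfspace_coords field_simps)
  have "(h - (a \<bullet> c - r * norm a)) / (r * norm a) \<le> 0" using ge r a by (intro divide_nonpos_pos) auto
  then show "lorentz (sphere_coords c r) (halfspace_coords a h) \<le> -1" using L by linarith
  have "tangent3 (CBall c r) (HalfSpace a h) \<longleftrightarrow> a \<bullet> c - r * norm a = h"
    unfolding tangent3_def ball3_set.simps Some_image_Int_insert_None ex1_mem_Some_image
    using unique_cball_Int_halfspace_iff[OF r a ge] .
  also have "\<dots> \<longleftrightarrow> (h - (a \<bullet> c - r * norm a)) / (r * norm a) = 0" using r a by auto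
  also have "\<dots> \<longleftrightarrow> lorentz (sphere_coords c r) (halfspace_coords a h) = -1"
    unfolding L[symmetric] by linarith
  finally show "tangent3 (CBall c r) (HalfSpace a h) \<longleftrightarrow> lorentz (sphere_coords c r) (halfspace_coords a h) = -1" .
qed

(* The last clause excludes a ball together with its complementary exterior: their product is
   -1, but they meet along a whole sphere. *)
lemma inversive_coords_packing_pair:
  assumes "valid_ball3 B" "valid_ball3 B'" and "ball3_interior B \<inter> ball3_interior B' = {}"
  shows "lorentz (inversive_coords B) (inversive_coords B') \<le> -1
    \<and> (tangent3 B B' \<longleftrightarrow> lorentz (inversive_coords B) (inversive_coords B') = -1
         \<and> inversive_coords B' \<noteq> - inversive_coords B)"
proof -
  define P where "P B B' \<longleftrightarrow> lorentz (inversive_coords B) (inversive_coords B') \<le> -1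
    \<and> (tangent3 B B' \<longleftrightarrow> lorentz (inversive_coords B) (inversive_coords B') = -1
         \<and> inversive_coords B' \<noteq> - inversive_coords B)" for B B'
  have sym: "P B' B" if "P B B'" for B B'
    using that by (auto simp: P_def lorentz_comm tangent3_def Int_commute minus_equation_iff)
  have CBall: "P (CBall c r) B'"
    if "0 < r" "valid_ball3 B'" "Some ` ball c r \<inter> ball3_interior B' = {}" for c r B'
  proof (cases B')
    case (CBall c2 r2)
    then show ?thesis
      using that CBall_CBall_inversive[of r r2 c c2] neq_uminus_sphere_coords[of r "sphere_coords c2 r2"]
      by (auto simp: P_def Some_image_Int bend_sphere_coords)
  next
    case (Exterior e R)
    then show ?thesis
      using that CBall_Exterior_inversive[of r R c e] by (auto simp: P_def Some_image_Int_insert_None)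
  next
    case (HalfSpace a h)
    then show ?thesis
      using that CBall_HalfSpace_inversive[of r a c h] neq_uminus_sphere_coords[of r "halfspace_coords a h"]
      by (auto simp: P_def Some_image_Int_insert_None bend_halfspace_coords)
  qed
  have "P B B'"
  proof (cases "\<exists>c r. B = CBall c r")
    case True
    then show ?thesis using CBall assms by auto
  next
    case False
    then obtain c r where "B' = CBall c r" using assms by (cases B; cases B') auto
    then have "P B' B" using CBall assms by (auto simp: Int_commute)
    then show ?thesis by (rule sym)
  qed
  then show ?thesis by (simp add: P_def)
qed

lemma ball_packing_inversive:
  assumes valid: "\<forall>u\<in>U. valid_ball3 (bl u)"
    and disj: "\<forall>u\<in>U. \<forall>v\<in>U. u \<noteq> v \<longrightarrow> ball3_interior (bl u) \<inter> ball3_interior (bl v) = {}"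
  shows "packing_family U (\<lambda>u. inversive_coords (bl u))"
  unfolding packing_family_def
proof (intro conjI ballI impI)
  fix u assume "u \<in> U"
  then show "lorentz (inversive_coords (bl u)) (inversive_coords (bl u)) = 1"
    using valid inversive_coords_unit by blast
next
  fix u v assume "u \<in> U" "v \<in> U" "u \<noteq> v"
  then show "lorentz (inversive_coords (bl u)) (inversive_coords (bl v)) \<le> -1"
    using inversive_coords_packing_pair[of "bl u" "bl v"] valid disj by blast
qed

lemma packing_family_reindex:
  assumes "packing_family U x" and "inj f" and "f ` V \<subseteq> U"
  shows "packing_family V (\<lambda>i. x (f i))"
  using packing_familyD[OF assms(1)] assms(2,3) unfolding packing_family_def inj_def by blast

section \<open>Packings of joins\<close>

lemma simple_graph_finite: "simple_graph V E \<Longrightarrow> finite V"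
  unfolding simple_graph_def by (rule conjunct1)

lemma simple_graph_irrefl: "simple_graph V E \<Longrightarrow> \<not> E x x"
  unfolding simple_graph_def by blast

lemma join_side_C4:
  assumes G: "simple_graph V E" "card V = 4" and W: "finite W" "card W = 4"
    and fam: "packing_family V a" "packing_family W b"
    and cross: "\<forall>i\<in>V. \<forall>j\<in>W. lorentz (a i) (b j) = -1"
    and tangent: "\<forall>i\<in>V. \<forall>k\<in>V. i \<noteq> k \<longrightarrow> (E i k \<longleftrightarrow> lorentz (a i) (a k) = -1 \<and> a k \<noteq> - a i)"
  shows "graph_iso V E C4_verts C4_edges"
proof (rule packing_families_cross_C4[OF _ G(2) W fam cross])
  show "finite V" using G(1) by (rule simple_graph_finite)
  obtain j where j: "j \<in> W" using W by (metis all_not_in_conv card.empty zero_neq_numeral)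
  show "\<forall>i\<in>V. \<forall>k\<in>V. E i k \<longleftrightarrow> i \<noteq> k \<and> lorentz (a i) (a k) = -1"
  proof (intro ballI)
    fix i k assume ik: "i \<in> V" "k \<in> V"
    have "a k \<noteq> - a i"
    proof
      assume "a k = - a i"
      then have "lorentz (a k) (b j) = 1" using cross ik j by (simp add: lorentz_minus_left)
      then show False using cross ik j by simp
    qed
    moreover have "\<not> E i i" using G(1) by (rule simple_graph_irrefl)
    ultimately show "E i k \<longleftrightarrow> i \<noteq> k \<and> lorentz (a i) (a k) = -1"
      using tangent ik by (cases "i = k") auto
  qed
qed

lemma packed_join_inversive_family:
  assumes "ball_packable3 (join_verts V W) (join_edges V E W F)"
  obtains x where "packing_family (V <+> W) x"
    and "\<And>u v. u \<in> V <+> W \<Longrightarrow> v \<in> V <+> W \<Longrightarrow> u \<noteq> v \<Longrightarrow>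
      join_edges V E W F u v \<longleftrightarrow> lorentz (x u) (x v) = -1 \<and> x v \<noteq> - x u"
proof -
  obtain bl where valid: "\<forall>u\<in>V <+> W. valid_ball3 (bl u)"
    and disj: "\<forall>u\<in>V <+> W. \<forall>v\<in>V <+> W. u \<noteq> v \<longrightarrow> ball3_interior (bl u) \<inter> ball3_interior (bl v) = {}"
    and tang: "\<forall>u\<in>V <+> W. \<forall>v\<in>V <+> W. u \<noteq> v \<longrightarrow> (join_edges V E W F u v \<longleftrightarrow> tangent3 (bl u) (bl v))"
    using assms unfolding ball_packable3_def join_verts_def by (elim exE conjE) (rule that, assumption+)
  show ?thesis
  proof (rule that[of "\<lambda>u. inversive_coords (bl u)"])
    show "packing_family (V <+> W) (\<lambda>u. inversive_coords (bl u))"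
      using ball_packing_inversive[OF valid disj] .
    fix u v assume uv: "u \<in> V <+> W" "v \<in> V <+> W" "u \<noteq> v"
    then have "valid_ball3 (bl u)" "valid_ball3 (bl v)" "ball3_interior (bl u) \<inter> ball3_interior (bl v) = {}"
      using valid disj by blast+
    moreover have "join_edges V E W F u v \<longleftrightarrow> tangent3 (bl u) (bl v)"
      by (rule tang[rule_format, OF uv])
    ultimately show "join_edges V E W F u v \<longleftrightarrow>
        lorentz (inversive_coords (bl u)) (inversive_coords (bl v)) = -1
        \<and> inversive_coords (bl v) \<noteq> - inversive_coords (bl u)"
      using inversive_coords_packing_pair[of "bl u" "bl v"] by simp
  qed
qed

lemma packed_join_inversive:
  assumes "ball_packable3 (join_verts V W) (join_edges V E W F)"
  obtains a b where "packing_family V a" and "packing_family W b"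
    and "\<forall>i\<in>V. \<forall>j\<in>W. lorentz (a i) (b j) = -1"
    and "\<forall>i\<in>V. \<forall>k\<in>V. i \<noteq> k \<longrightarrow> (E i k \<longleftrightarrow> lorentz (a i) (a k) = -1 \<and> a k \<noteq> - a i)"
    and "\<forall>j\<in>W. \<forall>l\<in>W. j \<noteq> l \<longrightarrow> (F j l \<longleftrightarrow> lorentz (b j) (b l) = -1 \<and> b l \<noteq> - b j)"
proof -
  obtain x where fam: "packing_family (V <+> W) x"
    and edge: "\<And>u v. u \<in> V <+> W \<Longrightarrow> v \<in> V <+> W \<Longrightarrow> u \<noteq> v \<Longrightarrow>
      join_edges V E W F u v \<longleftrightarrow> lorentz (x u) (x v) = -1 \<and> x v \<noteq> - x u"
    using packed_join_inversive_family[OF assms] by blast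
  show ?thesis
  proof (rule that[of "\<lambda>i. x (Inl i)" "\<lambda>j. x (Inr j)"])
    show "packing_family V (\<lambda>i. x (Inl i))" "packing_family W (\<lambda>j. x (Inr j))"
      by (rule packing_family_reindex[OF fam inj_Inl] packing_family_reindex[OF fam inj_Inr]; auto)+
    show "\<forall>i\<in>V. \<forall>j\<in>W. lorentz (x (Inl i)) (x (Inr j)) = -1"
    proof (intro ballI)
      fix i j assume "i \<in> V" "j \<in> W"
      then show "lorentz (x (Inl i)) (x (Inr j)) = -1" using edge[of "Inl i" "Inr j"] by auto
    qed
    show "\<forall>i\<in>V. \<forall>k\<in>V. i \<noteq> k \<longrightarrow>
        (E i k \<longleftrightarrow> lorentz (x (Inl i)) (x (Inl k)) = -1 \<and> x (Inl k) \<noteq> - x (Inl i))"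
    proof (intro ballI impI)
      fix i k assume "i \<in> V" "k \<in> V" "i \<noteq> k"
      then show "E i k \<longleftrightarrow> lorentz (x (Inl i)) (x (Inl k)) = -1 \<and> x (Inl k) \<noteq> - x (Inl i)"
        using edge[of "Inl i" "Inl k"] by auto
    qed
    show "\<forall>j\<in>W. \<forall>l\<in>W. j \<noteq> l \<longrightarrow>
        (F j l \<longleftrightarrow> lorentz (x (Inr j)) (x (Inr l)) = -1 \<and> x (Inr l) \<noteq> - x (Inr j))"
    proof (intro ballI impI)
      fix j l assume "j \<in> W" "l \<in> W" "j \<noteq> l"
      then show "F j l \<longleftrightarrow> lorentz (x (Inr j)) (x (Inr l)) = -1 \<and> x (Inr l) \<noteq> - x (Inr j)"
        using edge[of "Inr j" "Inr l"] by auto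
    qed
  qed
qed

theorem corollary3p10:
  fixes V :: "'a set" and E :: "'a \<Rightarrow> 'a \<Rightarrow> bool"
    and W :: "'b set" and F :: "'b \<Rightarrow> 'b \<Rightarrow> bool"
  assumes "simple_graph V E" and "card V = 4"
    and "simple_graph W F" and "card W = 4"
    and "ball_packable3 (join_verts V W) (join_edges V E W F)"
  shows "graph_iso V E C4_verts C4_edges \<and> graph_iso W F C4_verts C4_edges"
proof -
  obtain a b where fam: "packing_family V a" "packing_family W b"
    and cross: "\<forall>i\<in>V. \<forall>j\<in>W. lorentz (a i) (b j) = -1"
    and tangentV: "\<forall>i\<in>V. \<forall>k\<in>V. i \<noteq> k \<longrightarrow> (E i k \<longleftrightarrow> lorentz (a i) (a k) = -1 \<and> a k \<noteq> - a i)"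
    and tangentW: "\<forall>j\<in>W. \<forall>l\<in>W. j \<noteq> l \<longrightarrow> (F j l \<longleftrightarrow> lorentz (b j) (b l) = -1 \<and> b l \<noteq> - b j)"
    using packed_join_inversive[OF assms(5)] by blast
  have cross': "\<forall>j\<in>W. \<forall>i\<in>V. lorentz (b j) (a i) = -1"
    using cross by (simp add: lorentz_comm)
  show ?thesis
    using join_side_C4[OF assms(1,2) simple_graph_finite[OF assms(3)] assms(4) fam cross tangentV]
      join_side_C4[OF assms(3,4) simple_graph_finite[OF assms(1)] assms(2) fam(2,1) cross' tangentW]
    by blast
qed

end
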